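(* For all $n\geq 3$, the center of $\mathcal{BR}(\mathfrak{S}_n)$ equals the submonoid $\{(1,J)\mid J \text{ boxed}\}$ generated by $e_1,\dots,e_{n-1}$, which is isomorphic to the monoid $\mathcal{C}_n$ of compositions of $n$.
   Context: $\mathfrak{C}_n$ is the partition monoid: set partitions of $[2n]$ (top points $1,\dots,n$, bottom points $n+1,\dots,2n$) with concatenation product. $I\preceq J$ means each block of $J$ is a union of blocks of $I$. $\mathfrak{S}_n\subseteq\mathfrak{C}_n$ consists of the partitions with all blocks of the form $\{i,n+j\}$; $1=\{\{i,n+i\}\}$. A set partition $J$ of $[2n]$ is boxed if $1\preceq J$ and the restriction of $J$ to $[n]$ has all blocks intervals. $\mathcal{BR}(\mathfrak{S}_n)$ is the set of pairs $(I,J)$ with $I\in\mathfrak{S}_n$, $J$ boxed, $I\preceq J$, with componentwise concatenation product. $e_i=(1,b_i)$, where $b_i$ merges the blocks $\{i,n+i\}$ and $\{i+1,n+i+1\}$ of $1$. $\mathcal{C}_n$ is the set of compositions of $n$ with positive parts, with product the finest common coarsening (join), where $\mu$ is finer than $\mu'$ if $\mu'$ is obtained by adding consecutive parts of $\mu$; boxed partitions correspond to compositions via the sizes of their blocks halved. *)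

theory Defs
  imports "HOL-Library.Disjoint_Sets" "HOL-Algebra.Group"
begin

text \<open>Points: top points 1..n, bottom points n+1..2n.\<close>

definition set_part :: "nat \<Rightarrow> nat set set \<Rightarrow> bool" where
  "set_part n P \<longleftrightarrow> partition_on {1..2*n} P"

definition block_rel :: "nat set set \<Rightarrow> (nat \<times> nat) set" where
  "block_rel P = {(x,y). \<exists>B\<in>P. x \<in> B \<and> y \<in> B}"

text \<open>Concatenation: P on points 1..2n (its bottom becomes the middle row n+1..2n),
  Q shifted by n (top = middle row, bottom = 2n+1..3n); take connected components,
  drop the middle row and relabel the bottom row back to n+1..2n.\<close>

definition concat_part :: "nat \<Rightarrow> nat set set \<Rightarrow> nat set set \<Rightarrow> nat set set" where
  "concat_part n P Q =
    (let R = (block_rel P \<union> block_rel ((\<lambda>B. (\<lambda>x. x + n) ` B) ` Q))\<^sup>*;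
         outer = {1..n} \<union> {2*n+1..3*n};
         g = (\<lambda>x. if x \<le> n then x else x - n)
     in {g ` (R `` {x} \<inter> outer) | x. x \<in> outer})"

definition finer :: "nat set set \<Rightarrow> nat set set \<Rightarrow> bool" where
  "finer I J \<longleftrightarrow> (\<forall>B\<in>J. \<exists>S\<subseteq>I. B = \<Union>S)"

definition one_part :: "nat \<Rightarrow> nat set set" where
  "one_part n = {{i, n+i} | i. i \<in> {1..n}}"

definition perm_part :: "nat \<Rightarrow> nat set set \<Rightarrow> bool" where
  "perm_part n P \<longleftrightarrow> set_part n P \<and> (\<forall>B\<in>P. \<exists>i\<in>{1..n}. \<exists>j\<in>{1..n}. B = {i, n+j})"

definition boxed :: "nat \<Rightarrow> nat set set \<Rightarrow> bool" where
  "boxed n J \<longleftrightarrow> set_part n J \<and> finer (one_part n) J \<and>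
     (\<forall>B\<in>J. \<exists>a b. B \<inter> {1..n} = {a..b})"

definition BR :: "nat \<Rightarrow> (nat set set \<times> nat set set) set" where
  "BR n = {(I,J). perm_part n I \<and> boxed n J \<and> finer I J}"

definition BR_mult :: "nat \<Rightarrow> (nat set set \<times> nat set set) \<Rightarrow> (nat set set \<times> nat set set)
    \<Rightarrow> (nat set set \<times> nat set set)" where
  "BR_mult n x y = (concat_part n (fst x) (fst y), concat_part n (snd x) (snd y))"

definition BR_monoid :: "nat \<Rightarrow> (nat set set \<times> nat set set) monoid" where
  "BR_monoid n = \<lparr>carrier = BR n, mult = BR_mult n, one = (one_part n, one_part n)\<rparr>"

definition BR_center :: "nat \<Rightarrow> (nat set set \<times> nat set set) set" where
  "BR_center n = {x \<in> BR n. \<forall>y\<in>BR n. BR_mult n x y = BR_mult n y x}"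

definition b_part :: "nat \<Rightarrow> nat \<Rightarrow> nat set set" where
  "b_part n i = insert {i, i+1, n+i, n+i+1} (one_part n - {{i, n+i}, {i+1, n+i+1}})"

definition e_gen :: "nat \<Rightarrow> nat \<Rightarrow> (nat set set \<times> nat set set)" where
  "e_gen n i = (one_part n, b_part n i)"

inductive_set gen_submonoid :: "nat \<Rightarrow> (nat set set \<times> nat set set) set" for n where
  gen_one: "(one_part n, one_part n) \<in> gen_submonoid n"
| gen_e: "1 \<le> i \<Longrightarrow> i \<le> n - 1 \<Longrightarrow> e_gen n i \<in> gen_submonoid n"
| gen_mult: "x \<in> gen_submonoid n \<Longrightarrow> y \<in> gen_submonoid n \<Longrightarrow> BR_mult n x y \<in> gen_submonoid n"

definition compositions :: "nat \<Rightarrow> nat list set" where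
  "compositions n = {mu. (\<forall>p\<in>set mu. 0 < p) \<and> sum_list mu = n}"

definition coarsens :: "nat list \<Rightarrow> nat list \<Rightarrow> bool" where
  "coarsens mu mu' \<longleftrightarrow> (\<exists>xss. mu = concat xss \<and> (\<forall>xs\<in>set xss. xs \<noteq> []) \<and> mu' = map sum_list xss)"

definition comp_join :: "nat list \<Rightarrow> nat list \<Rightarrow> nat list" where
  "comp_join mu nu = (THE rho. coarsens mu rho \<and> coarsens nu rho \<and>
      (\<forall>sigma. coarsens mu sigma \<and> coarsens nu sigma \<longrightarrow> coarsens rho sigma))"

definition comp_monoid :: "nat \<Rightarrow> nat list monoid" where
  "comp_monoid n = \<lparr>carrier = compositions n, mult = comp_join, one = replicate n 1\<rparr>"

end

theory Submission
  imports Defs "HOL-Combinatorics.Transposition"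
begin

section \<open>Compositions as sets of partial sums\<close>

fun partial_sums :: "nat list \<Rightarrow> nat set" where
  "partial_sums [] = {}"
| "partial_sums (a # l) = insert a ((+) a ` partial_sums l)"

lemma partial_sums_append:
  "partial_sums (xs @ ys) = partial_sums xs \<union> (+) (sum_list xs) ` partial_sums ys"
  by (induction xs) (auto simp: image_image add.assoc)

lemma partial_sums_nonzero: "0 \<notin> set l \<Longrightarrow> 0 \<notin> partial_sums l"
  by (induction l) auto

lemma partial_sums_le_sum_list: "s \<in> partial_sums l \<Longrightarrow> s \<le> sum_list l"
  by (induction l arbitrary: s) auto

lemma sum_list_in_partial_sums: "l \<noteq> [] \<Longrightarrow> sum_list l \<in> partial_sums l"
  by (induction l rule: induct_list012) auto

lemma partial_sums_eq_empty_iff [simp]: "partial_sums l = {} \<longleftrightarrow> l = []"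
  by (cases l) auto

lemma partial_sums_inject:
  assumes "0 \<notin> set xs" "0 \<notin> set ys" "partial_sums xs = partial_sums ys"
  shows "xs = ys"
  using assms
proof (induction xs arbitrary: ys)
  case Nil
  then show ?case by (metis partial_sums_eq_empty_iff)
next
  case (Cons a xs)
  then obtain b ys' where ys: "ys = b # ys'"
    by (cases ys) auto
  have "a \<in> partial_sums ys" "b \<in> partial_sums (a # xs)"
    using Cons.prems(3) ys by auto
  then have "a = b"
    using ys by auto
  have "a \<notin> (+) a ` partial_sums xs" "a \<notin> (+) a ` partial_sums ys'"
    using partial_sums_nonzero Cons.prems ys by fastforce+
  then have "(+) a ` partial_sums xs = (+) a ` partial_sums ys'"
    using Cons.prems(3) ys \<open>a = b\<close> by (simp add: insert_ident)
  then have "partial_sums xs = partial_sums ys'"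
    by (simp add: inj_image_eq_iff)
  then show ?case
    using Cons ys \<open>a = b\<close> by simp
qed

fun successive_diffs :: "nat \<Rightarrow> nat list \<Rightarrow> nat list" where
  "successive_diffs p [] = []"
| "successive_diffs p (x # xs) = (x - p) # successive_diffs x xs"

lemma partial_sums_successive_diffs:
  "sorted_wrt (<) (p # xs) \<Longrightarrow>
    partial_sums (successive_diffs p xs) = (\<lambda>s. s - p) ` set xs \<and> 0 \<notin> set (successive_diffs p xs)"
proof (induction xs arbitrary: p)
  case (Cons x xs)
  have "(+) (x - p) ` (\<lambda>s. s - x) ` set xs = (\<lambda>s. s - p) ` set xs"
    using Cons.prems by (force simp: image_image intro!: image_cong)
  with Cons show ?case by simp
qed simp

definition composition_of :: "nat set \<Rightarrow> nat list" where
  "composition_of E = successive_diffs 0 (sorted_list_of_set E)"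

lemma partial_sums_composition_of:
  assumes "finite E" "0 \<notin> E"
  shows "partial_sums (composition_of E) = E" and "0 \<notin> set (composition_of E)"
proof -
  have "sorted_wrt (<) (0 # sorted_list_of_set E)"
    using assms by (auto intro: gr0I)
  from partial_sums_successive_diffs[OF this] assms show
    "partial_sums (composition_of E) = E" "0 \<notin> set (composition_of E)"
    by (simp_all add: composition_of_def)
qed

lemma partial_sums_prefix:
  assumes "s \<in> partial_sums l"
  obtains l1 l2 where "l = l1 @ l2" "l1 \<noteq> []" "sum_list l1 = s"
  using assms
proof (induction l arbitrary: s thesis)
  case (Cons a l)
  show ?case
  proof (cases "s = a")
    case True
    then show ?thesis using Cons.prems(1)[of "[a]"] by simp
  next
    case False
    then obtain t where t: "t \<in> partial_sums l" "s = a + t"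
      using Cons.prems(2) by auto
    then obtain l1 l2 where "l = l1 @ l2" "l1 \<noteq> []" "sum_list l1 = t"
      using Cons.IH by blast
    then show ?thesis
      using Cons.prems(1)[of "a # l1" l2] t(2) by simp
  qed
qed simp

lemma coarsensD:
  assumes "coarsens mu nu" "0 \<notin> set mu"
  shows "0 \<notin> set nu \<and> sum_list nu = sum_list mu \<and> partial_sums nu \<subseteq> partial_sums mu"
proof -
  obtain xss where xss: "mu = concat xss" "\<forall>xs\<in>set xss. xs \<noteq> []" "nu = map sum_list xss"
    using assms(1) unfolding coarsens_def by blast
  have "0 \<notin> set (map sum_list xss) \<and> sum_list (map sum_list xss) = sum_list (concat xss) \<and>
      partial_sums (map sum_list xss) \<subseteq> partial_sums (concat xss)"
    using xss(2) assms(2) unfolding xss(1)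
  proof (induction xss)
    case (Cons xs xss)
    then have IH: "0 \<notin> set (map sum_list xss)" "sum_list (map sum_list xss) = sum_list (concat xss)"
      "partial_sums (map sum_list xss) \<subseteq> partial_sums (concat xss)"
      by simp_all
    have "xs \<noteq> []" "0 \<notin> set xs"
      using Cons.prems by simp_all
    then have "sum_list xs \<in> partial_sums xs" "sum_list xs \<noteq> 0"
      using sum_list_in_partial_sums partial_sums_nonzero by metis+
    with IH show ?case
      by (auto simp: partial_sums_append)
  qed simp
  then show ?thesis
    using xss by simp
qed

lemma coarsensI:
  assumes "0 \<notin> set mu" "0 \<notin> set nu" "sum_list mu = sum_list nu"
    "partial_sums nu \<subseteq> partial_sums mu"
  shows "coarsens mu nu"
  using assms
proof (induction nu arbitrary: mu)
  case Nil
  then have "mu = []"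
    by (cases mu) auto
  then show ?case
    unfolding coarsens_def by simp
next
  case (Cons b nu)
  then have "b \<in> partial_sums mu"
    by simp
  then obtain m1 m2 where mu: "mu = m1 @ m2" "m1 \<noteq> []" "sum_list m1 = b"
    by (rule partial_sums_prefix)
  have "partial_sums nu \<subseteq> partial_sums m2"
  proof
    fix s
    assume s: "s \<in> partial_sums nu"
    then have "0 < s" "b + s \<in> partial_sums mu"
      using Cons.prems partial_sums_nonzero by fastforce+
    moreover have "b + s \<notin> partial_sums m1"
      using partial_sums_le_sum_list mu \<open>0 < s\<close> by fastforce
    ultimately show "s \<in> partial_sums m2"
      using mu by (auto simp: partial_sums_append)
  qed
  with Cons.prems mu have "coarsens m2 nu"
    by (intro Cons.IH) auto
  then obtain xss where "m2 = concat xss" "\<forall>xs\<in>set xss. xs \<noteq> []" "nu = map sum_list xss"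
    unfolding coarsens_def by blast
  with mu show ?case
    unfolding coarsens_def by (intro exI[of _ "m1 # xss"]) auto
qed

lemma coarsens_iff_partial_sums:
  assumes "0 \<notin> set mu"
  shows "coarsens mu nu \<longleftrightarrow>
    0 \<notin> set nu \<and> sum_list nu = sum_list mu \<and> partial_sums nu \<subseteq> partial_sums mu"
  using coarsensD[OF _ assms] coarsensI[OF assms] by metis

lemma comp_join_eqI:
  assumes "mu \<in> compositions n" "nu \<in> compositions n" "rho \<in> compositions n"
    and rho: "partial_sums rho = partial_sums mu \<inter> partial_sums nu"
  shows "comp_join mu nu = rho"
proof -
  have pos: "0 \<notin> set mu" "0 \<notin> set nu" "0 \<notin> set rho"
    and sums: "sum_list mu = n" "sum_list nu = n" "sum_list rho = n"
    using assms(1-3) unfolding compositions_def by auto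
  have coarser: "coarsens mu sigma \<and> coarsens nu sigma \<longleftrightarrow> coarsens rho sigma" for sigma
    using pos sums by (auto simp: coarsens_iff_partial_sums rho)
  have "coarsens rho rho"
    using pos by (simp add: coarsens_iff_partial_sums)
  show ?thesis
    unfolding comp_join_def
  proof (rule the_equality)
    show "coarsens mu rho \<and> coarsens nu rho \<and>
      (\<forall>sigma. coarsens mu sigma \<and> coarsens nu sigma \<longrightarrow> coarsens rho sigma)"
      using coarser \<open>coarsens rho rho\<close> by blast
  next
    fix r
    assume "coarsens mu r \<and> coarsens nu r \<and>
      (\<forall>sigma. coarsens mu sigma \<and> coarsens nu sigma \<longrightarrow> coarsens r sigma)"
    then have "coarsens rho r" "coarsens r rho"
      using coarser \<open>coarsens rho rho\<close> by blast+
    then show "r = rho"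
      using pos partial_sums_inject[of r rho] by (auto simp: coarsens_iff_partial_sums)
  qed
qed

lemma composition_of_in_compositions:
  assumes "n \<in> E" "E \<subseteq> {1..n}"
  shows "composition_of E \<in> compositions n"
proof -
  have E: "finite E" "0 \<notin> E"
    using assms(2) finite_subset[OF assms(2)] by auto
  let ?mu = "composition_of E"
  have ps: "partial_sums ?mu = E" and pos: "0 \<notin> set ?mu"
    using partial_sums_composition_of[OF E] by simp_all
  then have "?mu \<noteq> []"
    using assms(1) by auto
  then have "sum_list ?mu \<in> E"
    using sum_list_in_partial_sums ps by blast
  moreover have "n \<le> sum_list ?mu"
    using partial_sums_le_sum_list[of n ?mu] ps assms(1) by simp
  ultimately have "sum_list ?mu = n"
    using assms(2) by fastforce
  with pos show ?thesis
    unfolding compositions_def by (auto intro: gr0I)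
qed

lemma partial_sums_composition:
  assumes "mu \<in> compositions n" "0 < n"
  shows "n \<in> partial_sums mu" "partial_sums mu \<subseteq> {1..n}"
proof -
  have pos: "0 \<notin> set mu" and sum: "sum_list mu = n"
    using assms(1) unfolding compositions_def by auto
  then have "mu \<noteq> []"
    using assms(2) by auto
  then show "n \<in> partial_sums mu"
    using sum_list_in_partial_sums sum by blast
  show "partial_sums mu \<subseteq> {1..n}"
  proof
    fix s
    assume s: "s \<in> partial_sums mu"
    have "s \<noteq> 0"
    proof
      assume "s = 0"
      with s have "0 \<in> partial_sums mu"
        by simp
      with partial_sums_nonzero[OF pos] show False
        by contradiction
    qed
    moreover have "s \<le> n"
      using partial_sums_le_sum_list[OF s] sum by simp
    ultimately show "s \<in> {1..n}"
      by simp
  qed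
qed

lemma bij_betw_composition_of:
  assumes "0 < n"
  shows "bij_betw composition_of {E. n \<in> E \<and> E \<subseteq> {1..n}} (compositions n)"
proof (rule bij_betw_byWitness[where f' = partial_sums])
  show "\<forall>E\<in>{E. n \<in> E \<and> E \<subseteq> {1..n}}. partial_sums (composition_of E) = E"
  proof
    fix E
    assume "E \<in> {E. n \<in> E \<and> E \<subseteq> {1..n}}"
    then have "finite E" "0 \<notin> E"
      using finite_subset[of E "{1..n}"] by auto
    then show "partial_sums (composition_of E) = E"
      by (rule partial_sums_composition_of(1))
  qed
  show "\<forall>mu\<in>compositions n. composition_of (partial_sums mu) = mu"
  proof
    fix mu
    assume mu: "mu \<in> compositions n"
    let ?E = "partial_sums mu"
    have "finite ?E" "0 \<notin> ?E"
      using partial_sums_composition[OF mu assms] finite_subset[of ?E "{1..n}"] by auto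
    moreover have "0 \<notin> set mu"
      using mu unfolding compositions_def by auto
    ultimately show "composition_of ?E = mu"
      using partial_sums_composition_of[of ?E] partial_sums_inject[of "composition_of ?E" mu] by simp
  qed
  show "composition_of ` {E. n \<in> E \<and> E \<subseteq> {1..n}} \<subseteq> compositions n"
    using composition_of_in_compositions by blast
  show "partial_sums ` compositions n \<subseteq> {E. n \<in> E \<and> E \<subseteq> {1..n}}"
    using partial_sums_composition assms by blast
qed

lemma composition_of_Int:
  assumes "n \<in> E" "E \<subseteq> {1..n}" "n \<in> F" "F \<subseteq> {1..n}"
  shows "composition_of (E \<inter> F) = comp_join (composition_of E) (composition_of F)"
proof (rule comp_join_eqI[symmetric])
  show "composition_of E \<in> compositions n"
    using assms(1,2) by (rule composition_of_in_compositions)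
  show "composition_of F \<in> compositions n"
    using assms(3,4) by (rule composition_of_in_compositions)
  show "composition_of (E \<inter> F) \<in> compositions n"
    using assms by (intro composition_of_in_compositions) auto
  have "finite E" "finite F"
    using finite_subset[OF assms(2)] finite_subset[OF assms(4)] by simp_all
  moreover have "0 \<notin> E" "0 \<notin> F"
    using assms(2,4) by auto
  ultimately show "partial_sums (composition_of (E \<inter> F)) =
      partial_sums (composition_of E) \<inter> partial_sums (composition_of F)"
    using partial_sums_composition_of(1) by simp
qed

section \<open>Concatenation of partitions\<close>

lemma partition_on_block_eq:
  "partition_on A P \<Longrightarrow> B \<in> P \<Longrightarrow> C \<in> P \<Longrightarrow> x \<in> B \<Longrightarrow> x \<in> C \<Longrightarrow> B = C"
  using disjointD[OF partition_onD2] by blast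

definition concat_rel :: "nat \<Rightarrow> nat set set \<Rightarrow> nat set set \<Rightarrow> (nat \<times> nat) set" where
  "concat_rel n P Q = (block_rel P \<union> block_rel ((\<lambda>B. (\<lambda>x. x + n) ` B) ` Q))\<^sup>*"

lemma concat_rel_refl [simp]: "(x, x) \<in> concat_rel n P Q"
  by (simp add: concat_rel_def)

lemma concat_rel_trans: "(x, y) \<in> concat_rel n P Q \<Longrightarrow> (y, z) \<in> concat_rel n P Q \<Longrightarrow> (x, z) \<in> concat_rel n P Q"
  unfolding concat_rel_def by (rule rtrancl_trans)

lemma concat_rel_sym: "(x, y) \<in> concat_rel n P Q \<Longrightarrow> (y, x) \<in> concat_rel n P Q"
proof -
  have "sym (block_rel R)" for R
    by (auto simp: block_rel_def intro!: symI)
  then show "(x, y) \<in> concat_rel n P Q \<Longrightarrow> (y, x) \<in> concat_rel n P Q"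
    unfolding concat_rel_def by (meson sym_Un sym_rtrancl symD)
qed

lemma concat_rel_upper: "B \<in> P \<Longrightarrow> x \<in> B \<Longrightarrow> y \<in> B \<Longrightarrow> (x, y) \<in> concat_rel n P Q"
  unfolding concat_rel_def block_rel_def by (rule r_into_rtrancl) blast

lemma concat_rel_lower: "B \<in> Q \<Longrightarrow> x \<in> B \<Longrightarrow> y \<in> B \<Longrightarrow> (x + n, y + n) \<in> concat_rel n P Q"
  unfolding concat_rel_def block_rel_def by (rule r_into_rtrancl) blast

lemma concat_rel_Image_subset:
  assumes "x \<in> S"
    and "\<And>B a b. B \<in> P \<Longrightarrow> a \<in> B \<Longrightarrow> b \<in> B \<Longrightarrow> a \<in> S \<Longrightarrow> b \<in> S"
    and "\<And>B a b. B \<in> Q \<Longrightarrow> a \<in> B \<Longrightarrow> b \<in> B \<Longrightarrow> a + n \<in> S \<Longrightarrow> b + n \<in> S"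
  shows "concat_rel n P Q `` {x} \<subseteq> S"
proof -
  have "b \<in> S" if a: "a \<in> S" and ab: "(a, b) \<in> block_rel P \<union> block_rel ((\<lambda>B. (\<lambda>x. x + n) ` B) ` Q)"
    for a b
    using ab
  proof
    assume "(a, b) \<in> block_rel P"
    then show "b \<in> S"
      using assms(2) a unfolding block_rel_def by blast
  next
    assume "(a, b) \<in> block_rel ((\<lambda>B. (\<lambda>x. x + n) ` B) ` Q)"
    then obtain B a' b' where "B \<in> Q" "a' \<in> B" "b' \<in> B" "a = a' + n" "b = b' + n"
      unfolding block_rel_def by blast
    then show "b \<in> S"
      using assms(3) a by blast
  qed
  then have "(block_rel P \<union> block_rel ((\<lambda>B. (\<lambda>x. x + n) ` B) ` Q)) `` S \<subseteq> S"
    by blast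
  then have "concat_rel n P Q `` S = S"
    unfolding concat_rel_def by (rule Image_closed_trancl)
  moreover have "concat_rel n P Q `` {x} \<subseteq> concat_rel n P Q `` S"
    using assms(1) by (intro Image_mono) auto
  ultimately show ?thesis
    by simp
qed

lemma concat_part_components:
  assumes components: "\<And>i. i \<in> {1..n} \<Longrightarrow> concat_rel n P Q `` {i} = S i"
    and bottom: "\<And>k. k \<in> {1..n} \<Longrightarrow> \<exists>i\<in>{1..n}. 2*n + k \<in> S i"
  shows "concat_part n P Q =
    {(\<lambda>x. if x \<le> n then x else x - n) ` (S i \<inter> ({1..n} \<union> {2*n+1..3*n})) | i. i \<in> {1..n}}"
proof -
  define outer where "outer = {1..n} \<union> {2*n+1..3*n}"
  let ?R = "concat_rel n P Q"
  have "?R `` {x} \<in> S ` {1..n}" if x: "x \<in> outer" for x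
  proof (cases "x \<le> n")
    case True
    then show ?thesis
      using x components unfolding outer_def by auto
  next
    case False
    then have "x - 2*n \<in> {1..n}" "2*n + (x - 2*n) = x"
      using x unfolding outer_def by auto
    then obtain i where i: "i \<in> {1..n}" "x \<in> S i"
      using bottom by metis
    then have "(i, x) \<in> ?R"
      using components by blast
    then have "?R `` {x} = ?R `` {i}"
      using concat_rel_trans concat_rel_sym by blast
    then show ?thesis
      using components i(1) by simp
  qed
  moreover have "S ` {1..n} \<subseteq> (\<lambda>x. ?R `` {x}) ` outer"
    using components unfolding outer_def by force
  ultimately have "(\<lambda>x. ?R `` {x}) ` outer = S ` {1..n}"
    by blast
  moreover have "concat_part n P Q =
      (\<lambda>X. (\<lambda>x. if x \<le> n then x else x - n) ` (X \<inter> outer)) ` ((\<lambda>x. ?R `` {x}) ` outer)"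
    unfolding concat_part_def Let_def concat_rel_def[symmetric] outer_def[symmetric]
    by (simp only: setcompr_eq_image image_image Collect_mem_eq)
  ultimately show ?thesis
    unfolding outer_def by (simp only: setcompr_eq_image image_image Collect_mem_eq)
qed

section \<open>Permutation diagrams\<close>

definition perm_diagram :: "nat \<Rightarrow> (nat \<Rightarrow> nat) \<Rightarrow> nat set set" where
  "perm_diagram n f = {{i, n + f i} | i. i \<in> {1..n}}"

lemma one_part_eq_perm_diagram_id: "one_part n = perm_diagram n id"
  by (simp add: one_part_def perm_diagram_def)

lemma perm_diagram_cong: "(\<And>i. i \<in> {1..n} \<Longrightarrow> f i = g i) \<Longrightarrow> perm_diagram n f = perm_diagram n g"
  unfolding perm_diagram_def by (metis (no_types, lifting))

lemma perm_diagram_eqD: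
  assumes "perm_diagram n f = perm_diagram n g"
    and "f ` {1..n} \<subseteq> {1..n}" "g ` {1..n} \<subseteq> {1..n}" "i \<in> {1..n}"
  shows "f i = g i"
proof -
  have "{i, n + f i} \<in> perm_diagram n g"
    using assms(1,4) unfolding perm_diagram_def by blast
  then obtain j where "j \<in> {1..n}" "{i, n + f i} = {j, n + g j}"
    unfolding perm_diagram_def by blast
  then show ?thesis
    using assms(2-4) by (auto simp: doubleton_eq_iff)
qed

lemma concat_rel_perm_diagram_Image:
  assumes f: "bij_betw f {1..n} {1..n}" and g: "bij_betw g {1..n} {1..n}" and i: "i \<in> {1..n}"
  shows "concat_rel n (perm_diagram n f) (perm_diagram n g) `` {i} = {i, n + f i, 2*n + g (f i)}"
    (is "?R `` {i} = ?S")
proof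
  have f_in: "f j \<in> {1..n}" and g_in: "g j \<in> {1..n}" if "j \<in> {1..n}" for j
    using f g that by (meson bij_betwE)+
  have f_inj: "inj_on f {1..n}" and g_inj: "inj_on g {1..n}"
    using f g by (simp_all add: bij_betw_imp_inj_on)
  show "?R `` {i} \<subseteq> ?S"
  proof (rule concat_rel_Image_subset)
    fix B a b
    assume "B \<in> perm_diagram n f" "a \<in> B" "b \<in> B" "a \<in> ?S"
    then obtain j where j: "j \<in> {1..n}" "a \<in> {j, n + f j}" "b \<in> {j, n + f j}" "a \<in> ?S"
      unfolding perm_diagram_def by blast
    then have "j = i"
      using i f_in[OF i] f_in[OF j(1)] g_in[OF f_in[OF i]] inj_onD[OF f_inj _ j(1) i] by auto
    then show "b \<in> ?S"
      using j(3) by auto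
  next
    fix B a b
    assume "B \<in> perm_diagram n g" "a \<in> B" "b \<in> B" "a + n \<in> ?S"
    then obtain j where j: "j \<in> {1..n}" "a \<in> {j, n + g j}" "b \<in> {j, n + g j}" "a + n \<in> ?S"
      unfolding perm_diagram_def by blast
    then have "j = f i"
      using i f_in[OF i] g_in[OF j(1)] g_in[OF f_in[OF i]] inj_onD[OF g_inj _ j(1) f_in[OF i]]
      by auto
    then show "b + n \<in> ?S"
      using j(3) by auto
  qed simp
next
  have "f i \<in> {1..n}"
    using f i by (meson bij_betwE)
  have "(i, n + f i) \<in> ?R"
    by (rule concat_rel_upper[of "{i, n + f i}"]) (use i in \<open>auto simp: perm_diagram_def\<close>)
  have "(f i + n, n + g (f i) + n) \<in> ?R"
    by (rule concat_rel_lower[of "{f i, n + g (f i)}"])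
      (use \<open>f i \<in> {1..n}\<close> in \<open>auto simp: perm_diagram_def\<close>)
  moreover have "f i + n = n + f i" "n + g (f i) + n = 2*n + g (f i)"
    by simp_all
  ultimately have "(n + f i, 2*n + g (f i)) \<in> ?R"
    by (simp only:)
  with \<open>(i, n + f i) \<in> ?R\<close> have "(i, 2*n + g (f i)) \<in> ?R"
    by (rule concat_rel_trans)
  with \<open>(i, n + f i) \<in> ?R\<close> show "?S \<subseteq> ?R `` {i}"
    by simp
qed

lemma concat_perm_diagram:
  assumes f: "bij_betw f {1..n} {1..n}" and g: "bij_betw g {1..n} {1..n}"
  shows "concat_part n (perm_diagram n f) (perm_diagram n g) = perm_diagram n (g \<circ> f)"
proof -
  define S where "S i = {i, n + f i, 2*n + g (f i)}" for i
  have "\<exists>i\<in>{1..n}. 2*n + k \<in> S i" if "k \<in> {1..n}" for k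
  proof -
    have "k \<in> g ` f ` {1..n}"
      using that bij_betw_imp_surj_on[OF f] bij_betw_imp_surj_on[OF g] by simp
    then obtain i where "i \<in> {1..n}" "g (f i) = k"
      by blast
    then show ?thesis
      unfolding S_def by blast
  qed
  with concat_rel_perm_diagram_Image[OF f g]
  have "concat_part n (perm_diagram n f) (perm_diagram n g) =
      {(\<lambda>x. if x \<le> n then x else x - n) ` (S i \<inter> ({1..n} \<union> {2*n+1..3*n})) | i. i \<in> {1..n}}"
    unfolding S_def by (rule concat_part_components)
  also have "\<dots> = perm_diagram n (g \<circ> f)"
    unfolding perm_diagram_def setcompr_eq_image Collect_mem_eq
  proof (rule image_cong[OF refl])
    fix i
    assume i: "i \<in> {1..n}"
    have "f i \<in> {1..n}" "g (f i) \<in> {1..n}"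
      using f g i by (meson bij_betwE)+
    then have "S i \<inter> ({1..n} \<union> {2*n+1..3*n}) = {i, 2*n + g (f i)}"
      using i unfolding S_def by auto
    then show "(\<lambda>x. if x \<le> n then x else x - n) ` (S i \<inter> ({1..n} \<union> {2*n+1..3*n})) = {i, n + (g \<circ> f) i}"
      using i by auto
  qed
  finally show ?thesis .
qed

lemma perm_part_perm_diagram:
  assumes f: "bij_betw f {1..n} {1..n}"
  shows "perm_part n (perm_diagram n f)"
proof -
  have f_in: "f i \<in> {1..n}" if "i \<in> {1..n}" for i
    using f that by (meson bij_betwE)
  have "x \<in> \<Union>(perm_diagram n f)" if x: "x \<in> {1..2*n}" for x
  proof (cases "x \<le> n")
    case True
    then have "{x, n + f x} \<in> perm_diagram n f"
      using x unfolding perm_diagram_def by auto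
    then show ?thesis
      by blast
  next
    case False
    then have "x - n \<in> f ` {1..n}"
      using x bij_betw_imp_surj_on[OF f] by auto
    then obtain i where "i \<in> {1..n}" "x = n + f i"
      using False by force
    then show ?thesis
      unfolding perm_diagram_def by blast
  qed
  moreover have "\<Union>(perm_diagram n f) \<subseteq> {1..2*n}"
    using f_in unfolding perm_diagram_def by force
  moreover have "disjnt B C" if BC: "B \<in> perm_diagram n f" "C \<in> perm_diagram n f" "B \<noteq> C" for B C
  proof -
    obtain i j where ij: "i \<in> {1..n}" "j \<in> {1..n}" "B = {i, n + f i}" "C = {j, n + f j}"
      using BC(1,2) unfolding perm_diagram_def by blast
    then have "i \<noteq> j"
      using BC(3) by blast
    then have "f i \<noteq> f j"
      using inj_onD[OF bij_betw_imp_inj_on[OF f]] ij(1,2) by blast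
    with ij show ?thesis
      using f_in[OF ij(1)] f_in[OF ij(2)] by (auto simp: disjnt_def)
  qed
  moreover have "{} \<notin> perm_diagram n f"
    unfolding perm_diagram_def by blast
  ultimately have "set_part n (perm_diagram n f)"
    unfolding set_part_def by (intro partition_onI) auto
  moreover have "\<forall>B\<in>perm_diagram n f. \<exists>i\<in>{1..n}. \<exists>j\<in>{1..n}. B = {i, n + j}"
    using f_in unfolding perm_diagram_def by blast
  ultimately show ?thesis
    unfolding perm_part_def by blast
qed

lemma perm_part_block_of_upper:
  assumes "perm_part n P" "i \<in> {1..n}"
  shows "\<exists>j\<in>{1..n}. {i, n + j} \<in> P"
proof -
  have "partition_on {1..2*n} P"
    using assms(1) unfolding perm_part_def set_part_def by simp
  then have "\<Union>P = {1..2*n}"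
    by (rule partition_onD1[symmetric])
  then have "i \<in> \<Union>P"
    using assms(2) by simp
  then obtain B where "B \<in> P" "i \<in> B"
    by blast
  with assms show ?thesis
    unfolding perm_part_def by fastforce
qed

lemma perm_partE:
  assumes "perm_part n P"
  obtains f where "bij_betw f {1..n} {1..n}" "P = perm_diagram n f"
proof -
  have part: "partition_on {1..2*n} P"
    and blocks: "\<forall>B\<in>P. \<exists>i\<in>{1..n}. \<exists>j\<in>{1..n}. B = {i, n + j}"
    using assms unfolding perm_part_def set_part_def by auto
  obtain f where f: "\<And>i. i \<in> {1..n} \<Longrightarrow> f i \<in> {1..n} \<and> {i, n + f i} \<in> P"
    using perm_part_block_of_upper[OF assms] by metis
  have "inj_on f {1..n}"
  proof (rule inj_onI)
    fix i i'
    assume i: "i \<in> {1..n}" "i' \<in> {1..n}" "f i = f i'"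
    then have "{i, n + f i} = {i', n + f i'}"
      using partition_on_block_eq[OF part conjunct2[OF f[OF i(1)]] conjunct2[OF f[OF i(2)]], of "n + f i"] by simp
    then show "i = i'"
      using i f[OF i(1)] f[OF i(2)] by (auto simp: doubleton_eq_iff)
  qed
  moreover have "f ` {1..n} = {1..n}"
    using f by (intro endo_inj_surj calculation) auto
  ultimately have "bij_betw f {1..n} {1..n}"
    by (simp add: bij_betw_def)
  moreover have "P = perm_diagram n f"
  proof
    show "perm_diagram n f \<subseteq> P"
      using f unfolding perm_diagram_def by blast
  next
    show "P \<subseteq> perm_diagram n f"
    proof
      fix B
      assume B: "B \<in> P"
      then obtain i j where ij: "i \<in> {1..n}" "j \<in> {1..n}" "B = {i, n + j}"
        using blocks by blast
      then have "B = {i, n + f i}"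
        using partition_on_block_eq[OF part B, of "{i, n + f i}" i] f by simp
      with ij(1) show "B \<in> perm_diagram n f"
        unfolding perm_diagram_def by blast
    qed
  qed
  ultimately show ?thesis
    using that by blast
qed

lemma perm_part_one_part: "perm_part n (one_part n)"
  unfolding one_part_eq_perm_diagram_id by (rule perm_part_perm_diagram) simp

lemma concat_one_part_left: "perm_part n P \<Longrightarrow> concat_part n (one_part n) P = P"
  by (elim perm_partE) (simp add: one_part_eq_perm_diagram_id concat_perm_diagram)

lemma concat_one_part_right: "perm_part n P \<Longrightarrow> concat_part n P (one_part n) = P"
  by (elim perm_partE) (simp add: one_part_eq_perm_diagram_id concat_perm_diagram)

section \<open>Boxed partitions\<close>

definition same_segment :: "nat set \<Rightarrow> nat \<Rightarrow> nat \<Rightarrow> bool" where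
  "same_segment E i j \<longleftrightarrow> (\<forall>e\<in>E. e < min i j \<or> max i j \<le> e)"

lemma same_segment_refl [simp]: "same_segment E i i"
  unfolding same_segment_def by auto

lemma same_segment_sym: "same_segment E i j \<Longrightarrow> same_segment E j i"
  unfolding same_segment_def by (simp add: min.commute max.commute)

lemma same_segment_trans: "same_segment E i j \<Longrightarrow> same_segment E j k \<Longrightarrow> same_segment E i k"
  unfolding same_segment_def by (metis le_trans max.bounded_iff min_le_iff_disj not_le)

lemma same_segment_antimono: "D \<subseteq> E \<Longrightarrow> same_segment E i j \<Longrightarrow> same_segment D i j"
  unfolding same_segment_def by blast

lemma same_segment_le_iff: "i \<le> j \<Longrightarrow> same_segment E i j \<longleftrightarrow> (\<forall>e\<in>E. \<not> (i \<le> e \<and> e < j))"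
  unfolding same_segment_def by (auto simp: min_def max_def)

lemma same_segment_between:
  "i \<le> j \<Longrightarrow> j \<le> l \<Longrightarrow> same_segment E i l \<Longrightarrow> same_segment E i j"
  using same_segment_le_iff[of i j E] same_segment_le_iff[of i l E] by (meson le_trans order.strict_trans2)

lemma same_segment_Suc:
  assumes "m \<notin> E"
  shows "same_segment E m (Suc m)"
  unfolding same_segment_def
proof
  fix e
  assume "e \<in> E"
  with assms have "e \<noteq> m"
    by blast
  then show "e < min m (Suc m) \<or> max m (Suc m) \<le> e"
    by auto
qed

lemma same_segment_Int_atLeastLessThan:
  assumes "i \<in> {1..n}" "j \<in> {1..n}"
  shows "same_segment (E \<inter> {1..<n}) i j \<longleftrightarrow> same_segment E i j"
  using assms unfolding same_segment_def by force

definition column :: "nat \<Rightarrow> nat \<Rightarrow> nat" where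
  "column n x = (if x \<le> n then x else if x \<le> 2*n then x - n else x - 2*n)"

lemma column_upper [simp]: "x \<le> n \<Longrightarrow> column n x = x"
  and column_middle [simp]: "n < x \<Longrightarrow> x \<le> 2*n \<Longrightarrow> column n x = x - n"
  and column_lower [simp]: "2*n < x \<Longrightarrow> column n x = x - 2*n"
  by (simp_all add: column_def)

lemma column_in_range: "x \<in> {1..3*n} \<Longrightarrow> column n x \<in> {1..n}"
  unfolding column_def by auto

lemma column_add: "x \<in> {1..2*n} \<Longrightarrow> column n (x + n) = column n x"
  unfolding column_def by auto

definition segment_block :: "nat \<Rightarrow> nat set \<Rightarrow> nat \<Rightarrow> nat set" where
  "segment_block n E k = {x \<in> {1..2*n}. same_segment E k (column n x)}"

definition box_part :: "nat \<Rightarrow> nat set \<Rightarrow> nat set set" where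
  "box_part n E = segment_block n E ` {1..n}"

lemma segment_block_in_box_part: "k \<in> {1..n} \<Longrightarrow> segment_block n E k \<in> box_part n E"
  unfolding box_part_def by blast

lemma self_mem_segment_block: "k \<in> {1..n} \<Longrightarrow> k \<in> segment_block n E k"
  unfolding segment_block_def by auto

lemma segment_block_cong:
  assumes "same_segment E k k'"
  shows "segment_block n E k = segment_block n E k'"
  using assms same_segment_sym same_segment_trans unfolding segment_block_def by blast

lemma segment_block_Int_upper:
  "segment_block n E k \<inter> {1..n} = {j \<in> {1..n}. same_segment E k j}"
  unfolding segment_block_def by auto

lemma same_segment_columns:
  assumes "a \<in> segment_block n E k" "b \<in> segment_block n E k"
  shows "same_segment E (column n a) (column n b)"
proof -
  have "same_segment E k (column n a)" "same_segment E k (column n b)"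
    using assms unfolding segment_block_def by simp_all
  then show ?thesis
    by (rule same_segment_trans[OF same_segment_sym])
qed

lemma segment_block_three_rows:
  "(\<lambda>x. if x \<le> n then x else x - n) `
      ({x \<in> {1..3*n}. same_segment E i (column n x)} \<inter> ({1..n} \<union> {2*n+1..3*n})) =
    segment_block n E i" (is "?g ` ?T = _")
proof
  show "?g ` ?T \<subseteq> segment_block n E i"
  proof
    fix x
    assume "x \<in> ?g ` ?T"
    then obtain y where y: "y \<in> ?T" "x = ?g y"
      by blast
    show "x \<in> segment_block n E i"
    proof (cases "y \<le> n")
      case True
      with y show ?thesis
        unfolding segment_block_def by simp
    next
      case False
      with y have x: "x \<in> {1..2*n}" "y = x + n"
        by auto
      then have "column n y = column n x"
        by (simp add: column_add)
      with y(1) have "same_segment E i (column n x)"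
        by simp
      with x(1) show ?thesis
        unfolding segment_block_def by blast
    qed
  qed
next
  show "segment_block n E i \<subseteq> ?g ` ?T"
  proof
    fix x
    assume x: "x \<in> segment_block n E i"
    show "x \<in> ?g ` ?T"
    proof (cases "x \<le> n")
      case True
      with x show ?thesis
        unfolding segment_block_def by force
    next
      case False
      with x have "x + n \<in> ?T" "x = ?g (x + n)"
        unfolding segment_block_def by (auto simp: column_add)
      then show ?thesis
        by blast
    qed
  qed
qed

lemma concat_rel_box_part_Suc:
  assumes a: "a \<in> {1..<n}" and cut: "a \<notin> E \<inter> E'"
  shows "(a, Suc a) \<in> concat_rel n (box_part n E) (box_part n E')"
proof (cases "a \<in> E")
  case False
  then have "a \<in> segment_block n E a" "Suc a \<in> segment_block n E a"
    using a same_segment_Suc[of a E] by (auto simp: segment_block_def)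
  then show ?thesis
    using a by (intro concat_rel_upper[OF segment_block_in_box_part]) auto
next
  case True
  let ?R = "concat_rel n (box_part n E) (box_part n E')"
  have "a \<notin> E'"
    using True cut by blast
  have "a \<in> segment_block n E a" "n + a \<in> segment_block n E a"
    using a by (auto simp: segment_block_def)
  then have "(a, n + a) \<in> ?R"
    using a by (intro concat_rel_upper[OF segment_block_in_box_part]) auto
  moreover have "a \<in> segment_block n E' a" "Suc a \<in> segment_block n E' a"
    using a same_segment_Suc[OF \<open>a \<notin> E'\<close>] by (auto simp: segment_block_def)
  then have "(a + n, Suc a + n) \<in> ?R"
    using a by (intro concat_rel_lower[OF segment_block_in_box_part]) auto
  moreover have "n + Suc a \<in> segment_block n E (Suc a)" "Suc a \<in> segment_block n E (Suc a)"
    using a by (auto simp: segment_block_def)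
  then have "(n + Suc a, Suc a) \<in> ?R"
    using a by (intro concat_rel_upper[OF segment_block_in_box_part]) auto
  ultimately show ?thesis
    using concat_rel_trans by (metis add.commute)
qed

lemma concat_rel_box_part_same_segment:
  assumes "i \<in> {1..n}" "j \<in> {1..n}" "same_segment (E \<inter> E') i j"
  shows "(i, j) \<in> concat_rel n (box_part n E) (box_part n E')"
proof -
  have "(i, j) \<in> concat_rel n (box_part n E) (box_part n E')"
    if "i \<le> j" "i \<in> {1..n}" "j \<in> {1..n}" "same_segment (E \<inter> E') i j" for i j
    using that(1)
  proof (induction j rule: dec_induct)
    case (step m)
    then have "m \<notin> E \<inter> E'"
      using that same_segment_le_iff by auto
    then have "(m, Suc m) \<in> concat_rel n (box_part n E) (box_part n E')"
      using step that by (intro concat_rel_box_part_Suc) auto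
    with step.IH show ?case
      by (rule concat_rel_trans)
  qed simp
  then show ?thesis
    using assms concat_rel_sym same_segment_sym by (metis nat_le_linear)
qed

lemma concat_rel_box_part_column:
  assumes x: "x \<in> {1..3*n}"
  shows "(column n x, x) \<in> concat_rel n (box_part n E) (box_part n E')"
proof -
  let ?R = "concat_rel n (box_part n E) (box_part n E')"
  consider "x \<le> n" | "n < x" "x \<le> 2*n" | "2*n < x"
    by linarith
  then show ?thesis
  proof cases
    case 1
    then show ?thesis
      by simp
  next
    case 2
    then have "x - n \<in> segment_block n E (x - n)" "x \<in> segment_block n E (x - n)"
      by (auto simp: segment_block_def)
    then have "(x - n, x) \<in> ?R"
      using 2 by (intro concat_rel_upper[OF segment_block_in_box_part]) auto
    then show ?thesis
      using 2 by simp
  next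
    case 3
    define j where "j = x - 2*n"
    have j: "j \<in> {1..n}" "x = n + j + n"
      using 3 x unfolding j_def by auto
    have "j \<in> segment_block n E j" "n + j \<in> segment_block n E j"
      using j by (auto simp: segment_block_def)
    then have "(j, n + j) \<in> ?R"
      using j by (intro concat_rel_upper[OF segment_block_in_box_part]) auto
    moreover have "j \<in> segment_block n E' j" "n + j \<in> segment_block n E' j"
      using j by (auto simp: segment_block_def)
    then have "(j + n, n + j + n) \<in> ?R"
      using j by (intro concat_rel_lower[OF segment_block_in_box_part]) auto
    then have "(n + j, x) \<in> ?R"
      by (simp only: add.commute[of j n] j(2)[symmetric])
    ultimately have "(j, x) \<in> ?R"
      by (rule concat_rel_trans)
    moreover have "column n x = j"
      using 3 unfolding j_def by simp
    ultimately show ?thesis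
      by simp
  qed
qed

lemma concat_rel_box_part_Image:
  assumes i: "i \<in> {1..n}"
  shows "concat_rel n (box_part n E) (box_part n E') `` {i} =
    {x \<in> {1..3*n}. same_segment (E \<inter> E') i (column n x)}" (is "?R `` {i} = ?S")
proof
  show "?R `` {i} \<subseteq> ?S"
  proof (rule concat_rel_Image_subset)
    fix B a b
    assume "B \<in> box_part n E" "a \<in> B" "b \<in> B" and a: "a \<in> ?S"
    then obtain k where "a \<in> segment_block n E k" "b \<in> segment_block n E k"
      unfolding box_part_def by blast
    then have "same_segment E (column n a) (column n b)" "b \<in> {1..2*n}"
      using same_segment_columns unfolding segment_block_def by blast+
    then have "same_segment (E \<inter> E') (column n a) (column n b)" "b \<in> {1..3*n}"
      using same_segment_antimono[of "E \<inter> E'" E] by auto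
    with a show "b \<in> ?S"
      using same_segment_trans[of "E \<inter> E'" i "column n a" "column n b"] by simp
  next
    fix B a b
    assume "B \<in> box_part n E'" "a \<in> B" "b \<in> B" and a: "a + n \<in> ?S"
    then obtain k where "a \<in> segment_block n E' k" "b \<in> segment_block n E' k"
      unfolding box_part_def by blast
    then have "same_segment E' (column n a) (column n b)" "a \<in> {1..2*n}" "b \<in> {1..2*n}"
      using same_segment_columns unfolding segment_block_def by blast+
    then have "same_segment (E \<inter> E') (column n (a + n)) (column n (b + n))" "b + n \<in> {1..3*n}"
      using same_segment_antimono[of "E \<inter> E'" E'] by (auto simp: column_add)
    with a show "b + n \<in> ?S"
      using same_segment_trans[of "E \<inter> E'" i "column n (a + n)" "column n (b + n)"] by simp
  qed (use i in simp)
next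
  show "?S \<subseteq> ?R `` {i}"
  proof
    fix x
    assume "x \<in> ?S"
    then have x: "x \<in> {1..3*n}" "same_segment (E \<inter> E') i (column n x)"
      by simp_all
    have "(i, column n x) \<in> ?R"
      using concat_rel_box_part_same_segment[OF i column_in_range[OF x(1)] x(2)] .
    then have "(i, x) \<in> ?R"
      using concat_rel_box_part_column[OF x(1)] by (rule concat_rel_trans)
    then show "x \<in> ?R `` {i}"
      by simp
  qed
qed

lemma box_part_concat: "concat_part n (box_part n E) (box_part n E') = box_part n (E \<inter> E')"
proof -
  define S where "S i = {x \<in> {1..3*n}. same_segment (E \<inter> E') i (column n x)}" for i
  have "\<exists>i\<in>{1..n}. 2*n + k \<in> S i" if "k \<in> {1..n}" for k
    using that unfolding S_def by (intro bexI[of _ k]) auto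
  with concat_rel_box_part_Image
  have "concat_part n (box_part n E) (box_part n E') =
      {(\<lambda>x. if x \<le> n then x else x - n) ` (S i \<inter> ({1..n} \<union> {2*n+1..3*n})) | i. i \<in> {1..n}}"
    unfolding S_def by (rule concat_part_components)
  also have "\<dots> = box_part n (E \<inter> E')"
    unfolding box_part_def setcompr_eq_image Collect_mem_eq S_def segment_block_three_rows ..
  finally show ?thesis .
qed

lemma set_part_box_part: "set_part n (box_part n E)"
  unfolding set_part_def
proof (rule partition_onI)
  show "\<Union>(box_part n E) = {1..2*n}"
  proof
    show "\<Union>(box_part n E) \<subseteq> {1..2*n}"
      unfolding box_part_def segment_block_def by blast
  next
    show "{1..2*n} \<subseteq> \<Union>(box_part n E)"
    proof
      fix x
      assume "x \<in> {1..2*n}"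
      then have "x \<in> segment_block n E (column n x)" "column n x \<in> {1..n}"
        using column_in_range[of x n] unfolding segment_block_def by auto
      then show "x \<in> \<Union>(box_part n E)"
        unfolding box_part_def by blast
    qed
  qed
next
  fix p q
  assume "p \<in> box_part n E" "q \<in> box_part n E" "p \<noteq> q"
  then obtain k k' where p: "p = segment_block n E k" and q: "q = segment_block n E k'"
    and "segment_block n E k \<noteq> segment_block n E k'"
    unfolding box_part_def by blast
  then have "\<not> same_segment E k k'"
    using segment_block_cong by blast
  then show "disjnt p q"
    unfolding p q disjnt_def segment_block_def using same_segment_sym same_segment_trans by blast
next
  show "{} \<notin> box_part n E"
    unfolding box_part_def using self_mem_segment_block by blast
qed

lemma finer_one_part_box_part: "finer (one_part n) (box_part n E)"
  unfolding finer_def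
proof
  fix B
  assume "B \<in> box_part n E"
  then obtain k where B: "B = segment_block n E k"
    unfolding box_part_def by blast
  define S where "S = {{j, n + j} | j. j \<in> {1..n} \<and> same_segment E k j}"
  have "S \<subseteq> one_part n"
    unfolding S_def one_part_def by blast
  moreover have "B = \<Union>S"
  proof
    show "B \<subseteq> \<Union>S"
    proof
      fix x
      assume x: "x \<in> B"
      then have "x \<in> {1..2*n}"
        unfolding B segment_block_def by blast
      then have "column n x = (if x \<le> n then x else x - n)"
        by (simp add: column_def)
      with \<open>x \<in> {1..2*n}\<close> have "column n x \<in> {1..n}" "x \<in> {column n x, n + column n x}"
        by auto
      moreover have "same_segment E k (column n x)"
        using x unfolding B segment_block_def by blast
      ultimately show "x \<in> \<Union>S"
        unfolding S_def by blast
    qed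
  next
    show "\<Union>S \<subseteq> B"
      unfolding S_def B segment_block_def by auto
  qed
  ultimately show "\<exists>S\<subseteq>one_part n. B = \<Union>S"
    by blast
qed

lemma segment_block_upper_interval:
  assumes k: "k \<in> {1..n}"
  shows "\<exists>a b. segment_block n E k \<inter> {1..n} = {a..b}"
proof -
  define T where "T = {j \<in> {1..n}. same_segment E k j}"
  have T: "finite T" "k \<in> T"
    using k unfolding T_def by auto
  have "T = {Min T..Max T}"
  proof
    show "T \<subseteq> {Min T..Max T}"
      using T by auto
  next
    show "{Min T..Max T} \<subseteq> T"
    proof
      fix y
      assume y: "y \<in> {Min T..Max T}"
      have "Min T \<in> T" "Max T \<in> T"
        using T by (auto intro: Min_in Max_in)
      then have min: "Min T \<in> {1..n}" "same_segment E k (Min T)"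
        and max: "Max T \<in> {1..n}" "same_segment E k (Max T)"
        unfolding T_def by simp_all
      have "same_segment E (Min T) (Max T)"
        using same_segment_trans[OF same_segment_sym[OF min(2)] max(2)] .
      then have "same_segment E (Min T) y"
        using y same_segment_between by auto
      with min(2) have "same_segment E k y"
        by (rule same_segment_trans)
      with y min(1) max(1) show "y \<in> T"
        unfolding T_def by auto
    qed
  qed
  then show ?thesis
    unfolding segment_block_Int_upper T_def[symmetric] by blast
qed

lemma boxed_box_part: "boxed n (box_part n E)"
  unfolding boxed_def box_part_def
  using set_part_box_part finer_one_part_box_part segment_block_upper_interval
  unfolding box_part_def by blast

definition cut_points :: "nat \<Rightarrow> nat set set \<Rightarrow> nat set" where
  "cut_points n J = (\<lambda>B. Max (B \<inter> {1..n})) ` J"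

lemma Max_segment_block_upper:
  assumes k: "k \<in> {1..n}"
  shows "Max (segment_block n E k \<inter> {1..n}) \<in> E \<inter> {1..<n} \<union> {n}"
proof (rule ccontr)
  let ?T = "segment_block n E k \<inter> {1..n}"
  assume not_cut: "Max ?T \<notin> E \<inter> {1..<n} \<union> {n}"
  have "finite ?T" "k \<in> ?T"
    using k by (auto simp: self_mem_segment_block)
  then have "Max ?T \<in> ?T"
    by (intro Max_in) auto
  then have m: "Max ?T \<in> {1..n}" "same_segment E k (Max ?T)"
    unfolding segment_block_Int_upper by simp_all
  with not_cut have "Max ?T \<notin> E" "Suc (Max ?T) \<in> {1..n}"
    by auto
  with m(2) have "Suc (Max ?T) \<in> ?T"
    unfolding segment_block_Int_upper using same_segment_trans same_segment_Suc by blast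
  then show False
    using Max_ge[OF \<open>finite ?T\<close>] by fastforce
qed

lemma Max_segment_block_upper_cut:
  assumes e: "e \<in> E \<inter> {1..<n} \<union> {n}" "e \<in> {1..n}"
  shows "Max (segment_block n E e \<inter> {1..n}) = e"
proof (rule Max_eqI)
  fix y
  assume "y \<in> segment_block n E e \<inter> {1..n}"
  then show "y \<le> e"
    using e unfolding segment_block_Int_upper same_segment_def by force
qed (use e in \<open>auto simp: self_mem_segment_block\<close>)

lemma cut_points_box_part:
  assumes n: "0 < n"
  shows "cut_points n (box_part n E) = E \<inter> {1..<n} \<union> {n}"
proof
  show "cut_points n (box_part n E) \<subseteq> E \<inter> {1..<n} \<union> {n}"
    unfolding cut_points_def box_part_def image_image
    by (intro image_subsetI Max_segment_block_upper)
next
  show "E \<inter> {1..<n} \<union> {n} \<subseteq> cut_points n (box_part n E)"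
  proof
    fix e
    assume e: "e \<in> E \<inter> {1..<n} \<union> {n}"
    then have "e \<in> {1..n}"
      using n by auto
    with e show "e \<in> cut_points n (box_part n E)"
      unfolding cut_points_def box_part_def image_image
      using Max_segment_block_upper_cut by (intro rev_image_eqI[of e]) auto
  qed
qed

lemma partition_on_block_subset: "partition_on A P \<Longrightarrow> B \<in> P \<Longrightarrow> B \<subseteq> A"
  using partition_onD1 by blast

lemma interval_partition_same_segment:
  assumes part: "partition_on {1..n} T" and intervals: "\<forall>I\<in>T. \<exists>a b. I = {a..b}"
    and I: "I \<in> T" "j \<in> I" "j' \<in> I"
  shows "same_segment (Max ` T) j j'"
  unfolding same_segment_def
proof
  fix e
  assume "e \<in> Max ` T"
  then obtain I' where I': "I' \<in> T" "e = Max I'"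
    by blast
  have fin: "finite I" "finite I'"
    using partition_on_block_subset[OF part] I I' finite_subset by blast+
  show "e < min j j' \<or> max j j' \<le> e"
  proof (rule ccontr)
    assume "\<not> (e < min j j' \<or> max j j' \<le> e)"
    then have between: "min j j' \<le> e" "e < max j j'"
      by linarith+
    from intervals I(1) have "\<exists>a b. I = {a..b}"
      by (rule bspec)
    then obtain a b where "I = {a..b}"
      by blast
    with I between have "e \<in> I"
      by auto
    moreover have "I' \<noteq> {}"
      using partition_onD3[OF part] I'(1) by blast
    then have "e \<in> I'"
      unfolding I'(2) using fin(2) by (rule Max_in[rotated])
    ultimately have "e = Max I"
      using partition_on_block_eq[OF part I(1) I'(1)] I'(2) by blast
    then have "j \<le> e" "j' \<le> e"
      using Max_ge[OF fin(1)] I by simp_all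
    with between show False
      by simp
  qed
qed

lemma interval_partition_mem:
  assumes part: "partition_on {1..n} T" and intervals: "\<forall>I\<in>T. \<exists>a b. I = {a..b}"
    and I: "I \<in> T" "j \<in> I" and "j \<le> j'" "same_segment (Max ` T) j j'"
  shows "j' \<in> I"
proof -
  from intervals I(1) have "\<exists>a b. I = {a..b}"
    by (rule bspec)
  then obtain a b where ab: "I = {a..b}"
    by blast
  have "finite I"
    using partition_on_block_subset[OF part I(1)] finite_subset by blast
  then have "j \<le> Max I"
    using I(2) by simp
  moreover have "Max I \<in> Max ` T"
    using I(1) by (rule imageI)
  ultimately have "j' \<le> Max I"
    using assms(5,6) same_segment_le_iff[of j j' "Max ` T"] by (meson not_le)
  moreover have "Max I \<le> b" "a \<le> j"
    using I(2) unfolding ab by auto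
  ultimately show "j' \<in> I"
    using assms(5) unfolding ab by simp
qed

lemma interval_partition_mem_iff:
  assumes part: "partition_on {1..n} T" and intervals: "\<forall>I\<in>T. \<exists>a b. I = {a..b}"
    and I: "I \<in> T" "j \<in> I" and j': "j' \<in> {1..n}"
  shows "j' \<in> I \<longleftrightarrow> same_segment (Max ` T) j j'"
proof
  assume "j' \<in> I"
  with part intervals I show "same_segment (Max ` T) j j'"
    by (rule interval_partition_same_segment)
next
  assume same: "same_segment (Max ` T) j j'"
  show "j' \<in> I"
  proof (cases "j \<le> j'")
    case True
    with part intervals I show ?thesis
      using same by (rule interval_partition_mem)
  next
    case False
    have "\<Union>T = {1..n}"
      using partition_onD1[OF part] by simp
    with j' obtain I' where I': "I' \<in> T" "j' \<in> I'"
      by blast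
    moreover have "j' \<le> j"
      using False by simp
    ultimately have "j \<in> I'"
      using interval_partition_mem[OF part intervals _ _ _ same_segment_sym[OF same]] by blast
    then show ?thesis
      using partition_on_block_eq[OF part I(1) I'(1) I(2)] I'(2) by simp
  qed
qed

lemma mem_one_part_iff:
  assumes "s \<in> one_part n" "y \<in> {1..2*n}"
  shows "y \<in> s \<longleftrightarrow> s = {column n y, n + column n y}"
proof -
  obtain i where i: "i \<in> {1..n}" "s = {i, n + i}"
    using assms(1) unfolding one_part_def by blast
  have "column n y \<in> {1..n}"
    using assms(2) by (intro column_in_range) auto
  with i assms(2) show ?thesis
    unfolding column_def by (auto simp: doubleton_eq_iff)
qed

lemma finer_one_part_mem_iff_column:
  assumes finer: "finer (one_part n) J" and B: "B \<in> J" and x: "x \<in> {1..2*n}"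
  shows "x \<in> B \<longleftrightarrow> column n x \<in> B"
proof -
  obtain S where S: "S \<subseteq> one_part n" "B = \<Union>S"
    using finer B unfolding finer_def by blast
  have c: "column n x \<in> {1..2*n}" "column n (column n x) = column n x"
    using column_in_range[of x n] x by auto
  have "y \<in> B \<longleftrightarrow> {column n y, n + column n y} \<in> S" if "y \<in> {1..2*n}" for y
    using mem_one_part_iff[OF _ that] S by blast
  from this[OF x] this[OF c(1)] show ?thesis
    unfolding c(2) by blast
qed

lemma boxed_upper_nonempty:
  assumes J: "boxed n J" and B: "B \<in> J"
  shows "B \<inter> {1..n} \<noteq> {}"
proof -
  have part: "partition_on {1..2*n} J"
    using J unfolding boxed_def set_part_def by simp
  then have "B \<noteq> {}"
    using partition_onD3 B by blast
  then obtain x where "x \<in> B"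
    by blast
  moreover have "x \<in> {1..2*n}"
    using partition_on_block_subset[OF part B] \<open>x \<in> B\<close> by blast
  ultimately have "column n x \<in> B" "column n x \<in> {1..n}"
    using finer_one_part_mem_iff_column[of n J B x] J B column_in_range[of x n]
    unfolding boxed_def by auto
  then show ?thesis
    by blast
qed

lemma boxed_upper_interval_partition:
  assumes J: "boxed n J"
  shows "partition_on {1..n} ((\<lambda>B. B \<inter> {1..n}) ` J)"
    and "\<forall>I\<in>(\<lambda>B. B \<inter> {1..n}) ` J. \<exists>a b. I = {a..b}"
proof -
  have part: "partition_on {1..2*n} J"
    using J unfolding boxed_def set_part_def by simp
  have "{} \<notin> (\<lambda>B. B \<inter> {1..n}) ` J"
    using boxed_upper_nonempty[OF J] by blast
  then have "(\<inter>) {1..n} ` J - {{}} = (\<lambda>B. B \<inter> {1..n}) ` J"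
    by (simp add: Int_commute)
  then show "partition_on {1..n} ((\<lambda>B. B \<inter> {1..n}) ` J)"
    using partition_on_restrict[OF part, of "{1..n}"] by (simp add: Int_absorb2)
  show "\<forall>I\<in>(\<lambda>B. B \<inter> {1..n}) ` J. \<exists>a b. I = {a..b}"
    using J unfolding boxed_def by simp
qed

lemma boxed_block_eq_segment_block:
  assumes J: "boxed n J" and B: "B \<in> J" and k: "k \<in> B" "k \<in> {1..n}"
  shows "B = segment_block n (cut_points n J) k"
proof -
  have finer: "finer (one_part n) J" and part: "partition_on {1..2*n} J"
    using J unfolding boxed_def set_part_def by simp_all
  have cuts: "cut_points n J = Max ` (\<lambda>B. B \<inter> {1..n}) ` J"
    unfolding cut_points_def image_image ..
  have "x \<in> B \<longleftrightarrow> x \<in> {1..2*n} \<and> same_segment (cut_points n J) k (column n x)" for x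
  proof (cases "x \<in> {1..2*n}")
    case True
    then have "column n x \<in> {1..n}"
      by (intro column_in_range) auto
    moreover have "B \<inter> {1..n} \<in> (\<lambda>B. B \<inter> {1..n}) ` J" "k \<in> B \<inter> {1..n}"
      using B k by auto
    ultimately have "column n x \<in> B \<inter> {1..n} \<longleftrightarrow> same_segment (cut_points n J) k (column n x)"
      unfolding cuts
      by (rule interval_partition_mem_iff[OF boxed_upper_interval_partition[OF J], rotated 2])
    with True \<open>column n x \<in> {1..n}\<close> show ?thesis
      using finer_one_part_mem_iff_column[OF finer B True] by blast
  qed (use partition_on_block_subset[OF part B] in blast)
  then show ?thesis
    unfolding segment_block_def by blast
qed

lemma box_part_cut_points:
  assumes J: "boxed n J"
  shows "box_part n (cut_points n J) = J"
proof
  show "box_part n (cut_points n J) \<subseteq> J"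
  proof
    fix C
    assume "C \<in> box_part n (cut_points n J)"
    then obtain k where k: "k \<in> {1..n}" "C = segment_block n (cut_points n J) k"
      unfolding box_part_def by blast
    have part: "partition_on {1..2*n} J"
      using J unfolding boxed_def set_part_def by simp
    have "k \<in> \<Union>J"
      unfolding partition_onD1[OF part, symmetric] using k(1) by simp
    then obtain B where "B \<in> J" "k \<in> B"
      by blast
    with J k show "C \<in> J"
      using boxed_block_eq_segment_block by metis
  qed
next
  show "J \<subseteq> box_part n (cut_points n J)"
  proof
    fix B
    assume B: "B \<in> J"
    then obtain k where k: "k \<in> B" "k \<in> {1..n}"
      using boxed_upper_nonempty[OF J] by blast
    then have "B = segment_block n (cut_points n J) k"
      by (rule boxed_block_eq_segment_block[OF J B])
    with k(2) show "B \<in> box_part n (cut_points n J)"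
      using segment_block_in_box_part by simp
  qed
qed

lemma box_part_cong:
  assumes "E \<inter> {1..<n} = E' \<inter> {1..<n}"
  shows "box_part n E = box_part n E'"
proof -
  have "same_segment E k j \<longleftrightarrow> same_segment E' k j" if "k \<in> {1..n}" "j \<in> {1..n}" for k j
    using same_segment_Int_atLeastLessThan[OF that, of E] same_segment_Int_atLeastLessThan[OF that, of E']
      assms by simp
  then have "segment_block n E k = segment_block n E' k" if "k \<in> {1..n}" for k
    using that column_in_range unfolding segment_block_def by force
  then show ?thesis
    unfolding box_part_def by (rule image_cong[OF refl])
qed

lemma segment_block_eqI:
  assumes F: "F \<subseteq> {1..n}" and same: "\<And>j. j \<in> {1..n} \<Longrightarrow> same_segment E k j \<longleftrightarrow> j \<in> F"
  shows "segment_block n E k = F \<union> (+) n ` F"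
proof -
  have "x \<in> segment_block n E k \<longleftrightarrow> x \<in> F \<union> (+) n ` F" for x
  proof (cases "x \<in> {1..2*n}")
    case True
    then have "column n x \<in> {1..n}"
      by (intro column_in_range) auto
    with True have "x \<in> segment_block n E k \<longleftrightarrow> column n x \<in> F"
      using same unfolding segment_block_def by blast
    also have "\<dots> \<longleftrightarrow> x \<in> F \<union> (+) n ` F"
      using True F by (cases "x \<le> n") (auto simp: image_iff intro: bexI[of _ "x - n"])
    finally show ?thesis .
  next
    case False
    then show ?thesis
      using F unfolding segment_block_def by auto
  qed
  then show ?thesis
    by blast
qed

lemma same_segment_all_iff:
  "k \<in> {1..n} \<Longrightarrow> j \<in> {1..n} \<Longrightarrow> same_segment {1..n} k j \<longleftrightarrow> j = k"
  unfolding same_segment_def by (auto simp: min_def max_def)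

lemma one_part_eq_box_part: "one_part n = box_part n {1..n}"
proof -
  have "segment_block n {1..n} k = {k, n + k}" if "k \<in> {1..n}" for k
    using segment_block_eqI[of "{k}" n "{1..n}" k] same_segment_all_iff[OF that] that by auto
  then show ?thesis
    unfolding one_part_def box_part_def setcompr_eq_image Collect_mem_eq
    by (rule image_cong[OF refl, symmetric])
qed

lemma same_segment_remove_le_iff:
  assumes "1 \<le> k" "k \<le> j" "j \<le> n"
  shows "same_segment ({1..n} - {i}) k j \<longleftrightarrow> j = k \<or> (k = i \<and> j = Suc i)"
proof
  assume "same_segment ({1..n} - {i}) k j"
  then have no_cut: "\<forall>e\<in>{1..n} - {i}. \<not> (k \<le> e \<and> e < j)"
    by (simp only: same_segment_le_iff[OF assms(2)])
  show "j = k \<or> (k = i \<and> j = Suc i)"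
  proof (rule ccontr)
    assume "\<not> (j = k \<or> (k = i \<and> j = Suc i))"
    then consider "k \<noteq> i" "k < j" | "k = i" "Suc i < j"
      using assms(2) by linarith
    then show False
    proof cases
      case 1
      then show False
        using bspec[OF no_cut, of k] assms by simp
    next
      case 2
      then show False
        using bspec[OF no_cut, of "Suc i"] assms by simp
    qed
  qed
next
  assume "j = k \<or> (k = i \<and> j = Suc i)"
  then show "same_segment ({1..n} - {i}) k j"
    using same_segment_Suc[of i "{1..n} - {i}"] by auto
qed

lemma b_part_eq_box_part:
  assumes i: "1 \<le> i" "i < n"
  shows "b_part n i = box_part n ({1..n} - {i})"
proof -
  let ?E = "{1..n} - {i}"
  have same: "same_segment ?E k j \<longleftrightarrow> j = k \<or> {j, k} = {i, Suc i}"
    if "k \<in> {1..n}" "j \<in> {1..n}" for k j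
  proof (cases "k \<le> j")
    case True
    then show ?thesis
      using same_segment_remove_le_iff[of k j n i] that by (auto simp: doubleton_eq_iff)
  next
    case False
    then show ?thesis
      using same_segment_remove_le_iff[of j k n i] same_segment_sym[of ?E j k]
        same_segment_sym[of ?E k j] that by (auto simp: doubleton_eq_iff)
  qed
  have single: "segment_block n ?E k = {k, n + k}" if k: "k \<in> {1..n} - {i, Suc i}" for k
  proof -
    have "same_segment ?E k j \<longleftrightarrow> j \<in> {k}" if "j \<in> {1..n}" for j
      using same[of k j] k that by (auto simp: doubleton_eq_iff)
    then have "segment_block n ?E k = {k} \<union> (+) n ` {k}"
      using k by (intro segment_block_eqI) auto
    then show ?thesis
      by auto
  qed
  have pair: "segment_block n ?E k = {i, Suc i, n + i, n + Suc i}" if k: "k \<in> {i, Suc i}" for k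
  proof -
    have "same_segment ?E k j \<longleftrightarrow> j \<in> {i, Suc i}" if "j \<in> {1..n}" for j
      using same[of k j] k that i by (auto simp: doubleton_eq_iff)
    then have "segment_block n ?E k = {i, Suc i} \<union> (+) n ` {i, Suc i}"
      using i by (intro segment_block_eqI) auto
    then show ?thesis
      by auto
  qed
  have "{1..n} = ({1..n} - {i, Suc i}) \<union> {i, Suc i}"
    using i by auto
  then have "box_part n ?E = segment_block n ?E ` ({1..n} - {i, Suc i}) \<union> segment_block n ?E ` {i, Suc i}"
    unfolding box_part_def image_Un[symmetric] by (rule arg_cong)
  also have "segment_block n ?E ` ({1..n} - {i, Suc i}) = (\<lambda>k. {k, n + k}) ` ({1..n} - {i, Suc i})"
    using single by (rule image_cong[OF refl])
  also have "segment_block n ?E ` {i, Suc i} = {{i, Suc i, n + i, n + Suc i}}"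
    using pair by simp
  also have "(\<lambda>k. {k, n + k}) ` ({1..n} - {i, Suc i}) = one_part n - {{i, n + i}, {Suc i, n + Suc i}}"
  proof -
    have "inj_on (\<lambda>k. {k, n + k}) {1..n}"
      by (rule inj_onI) (auto simp: doubleton_eq_iff)
    then show ?thesis
      unfolding one_part_def setcompr_eq_image Collect_mem_eq using i
      by (subst inj_on_image_set_diff[of _ "{1..n}"]) auto
  qed
  finally show ?thesis
    unfolding b_part_def by auto
qed

lemma finer_box_part_empty:
  assumes "set_part n P"
  shows "finer P (box_part n {})"
  unfolding finer_def
proof
  fix B
  assume "B \<in> box_part n {}"
  then have "B = {1..2*n}"
    unfolding box_part_def segment_block_def same_segment_def by auto
  also have "\<dots> = \<Union>P"
    using assms partition_onD1[of "{1..2*n}" P] unfolding set_part_def by simp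
  finally show "\<exists>S\<subseteq>P. B = \<Union>S"
    by blast
qed

lemma cut_points_boxed:
  assumes n: "0 < n" and J: "boxed n J"
  shows "n \<in> cut_points n J" "cut_points n J \<subseteq> {1..n}"
proof -
  have "cut_points n J = cut_points n (box_part n (cut_points n J))"
    using box_part_cut_points[OF J] by simp
  also have "\<dots> = cut_points n J \<inter> {1..<n} \<union> {n}"
    using cut_points_box_part[OF n] .
  finally have eq: "cut_points n J = cut_points n J \<inter> {1..<n} \<union> {n}" .
  show "n \<in> cut_points n J"
    by (subst eq) simp
  show "cut_points n J \<subseteq> {1..n}"
    using n by (subst eq) auto
qed

lemma concat_boxed:
  assumes "boxed n J" "boxed n K"
  shows "concat_part n J K = box_part n (cut_points n J \<inter> cut_points n K)"
  using box_part_concat[of n "cut_points n J" "cut_points n K"]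
  by (simp add: box_part_cut_points assms)

lemma cut_points_concat_boxed:
  assumes n: "0 < n" and J: "boxed n J" and K: "boxed n K"
  shows "cut_points n (concat_part n J K) = cut_points n J \<inter> cut_points n K"
  using cut_points_box_part[OF n] cut_points_boxed[OF n J] cut_points_boxed[OF n K]
  unfolding concat_boxed[OF J K] by auto

lemma bij_betw_cut_points:
  assumes "0 < n"
  shows "bij_betw (cut_points n) {J. boxed n J} {E. n \<in> E \<and> E \<subseteq> {1..n}}"
proof (rule bij_betw_byWitness[where f' = "box_part n"])
  show "\<forall>J\<in>{J. boxed n J}. box_part n (cut_points n J) = J"
    using box_part_cut_points by blast
  show "\<forall>E\<in>{E. n \<in> E \<and> E \<subseteq> {1..n}}. cut_points n (box_part n E) = E"
    using cut_points_box_part[OF assms] by auto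
  show "cut_points n ` {J. boxed n J} \<subseteq> {E. n \<in> E \<and> E \<subseteq> {1..n}}"
    using cut_points_boxed[OF assms] by blast
  show "box_part n ` {E. n \<in> E \<and> E \<subseteq> {1..n}} \<subseteq> {J. boxed n J}"
    using boxed_box_part by blast
qed

lemma concat_boxed_boxed: "boxed n J \<Longrightarrow> boxed n K \<Longrightarrow> boxed n (concat_part n J K)"
  by (simp add: concat_boxed boxed_box_part)

section \<open>The centre, the generators and the compositions\<close>

lemma fixed_by_commuting_with_transpositions:
  fixes f :: "nat \<Rightarrow> nat"
  assumes n: "3 \<le> n" and f: "f ` {1..n} \<subseteq> {1..n}"
    and commute: "\<And>a b. a \<in> {1..n} \<Longrightarrow> b \<in> {1..n} \<Longrightarrow>
      f (Transposition.transpose a b i) = Transposition.transpose a b (f i)"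
    and i: "i \<in> {1..n}"
  shows "f i = i"
proof (rule ccontr)
  assume fi: "f i \<noteq> i"
  have "card {i, f i} < card {1..n}"
    using n fi by simp
  then have "\<not> {1..n} \<subseteq> {i, f i}"
    using card_mono[of "{i, f i}" "{1..n}"] by auto
  then obtain k where k: "k \<in> {1..n}" "k \<noteq> i" "k \<noteq> f i"
    by blast
  have "f (Transposition.transpose (f i) k i) = Transposition.transpose (f i) k (f i)"
    using commute f i k(1) by blast
  with fi k show False
    by simp
qed

lemma one_part_boxed_in_BR: "boxed n J \<Longrightarrow> (one_part n, J) \<in> BR n"
  unfolding BR_def boxed_def using perm_part_one_part by simp

lemma central_perm_part_eq_one_part:
  assumes n: "3 \<le> n" and P: "perm_part n P"
    and central: "\<And>Q. perm_part n Q \<Longrightarrow> concat_part n P Q = concat_part n Q P"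
  shows "P = one_part n"
proof -
  obtain f where f: "bij_betw f {1..n} {1..n}" and P_eq: "P = perm_diagram n f"
    using P by (rule perm_partE)
  have f_range: "f ` {1..n} = {1..n}"
    using f by (simp add: bij_betw_def)
  have commute: "f (Transposition.transpose a b i) = Transposition.transpose a b (f i)"
    if ab: "a \<in> {1..n}" "b \<in> {1..n}" and i: "i \<in> {1..n}" for a b i
  proof -
    let ?g = "Transposition.transpose a b"
    have g: "bij_betw ?g {1..n} {1..n}"
      using ab by simp
    have "perm_diagram n (?g \<circ> f) = concat_part n P (perm_diagram n ?g)"
      unfolding P_eq by (rule concat_perm_diagram[OF f g, symmetric])
    also have "\<dots> = concat_part n (perm_diagram n ?g) P"
      by (rule central[OF perm_part_perm_diagram[OF g]])
    also have "\<dots> = perm_diagram n (f \<circ> ?g)"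
      unfolding P_eq by (rule concat_perm_diagram[OF g f])
    finally have "perm_diagram n (?g \<circ> f) = perm_diagram n (f \<circ> ?g)" .
    moreover have "?g ` {1..n} = {1..n}"
      using ab by simp
    then have "(?g \<circ> f) ` {1..n} \<subseteq> {1..n}" "(f \<circ> ?g) ` {1..n} \<subseteq> {1..n}"
      unfolding image_comp[symmetric] using f_range by simp_all
    ultimately have "(?g \<circ> f) i = (f \<circ> ?g) i"
      using i by (rule perm_diagram_eqD)
    then show ?thesis
      by simp
  qed
  have "f i = i" if "i \<in> {1..n}" for i
    using fixed_by_commuting_with_transpositions[OF n equalityD1[OF f_range] commute[OF _ _ that] that] .
  then show ?thesis
    unfolding P_eq one_part_eq_perm_diagram_id by (intro perm_diagram_cong) simp
qed

lemma BR_center_eq: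
  assumes n: "3 \<le> n"
  shows "BR_center n = {(one_part n, J) | J. boxed n J}"
proof
  show "BR_center n \<subseteq> {(one_part n, J) | J. boxed n J}"
  proof
    fix x
    assume x: "x \<in> BR_center n"
    obtain P J where x_eq: "x = (P, J)"
      by (cases x)
    have "(P, J) \<in> BR n"
      using x unfolding x_eq BR_center_def by simp
    then have P: "perm_part n P" and J: "boxed n J"
      unfolding BR_def by simp_all
    have "concat_part n P Q = concat_part n Q P" if Q: "perm_part n Q" for Q
    proof -
      have "(Q, box_part n {}) \<in> BR n"
        using Q boxed_box_part finer_box_part_empty unfolding BR_def perm_part_def by simp
      moreover have "\<forall>y\<in>BR n. BR_mult n x y = BR_mult n y x"
        using x unfolding BR_center_def by simp
      ultimately have "BR_mult n x (Q, box_part n {}) = BR_mult n (Q, box_part n {}) x"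
        by blast
      then show ?thesis
        unfolding x_eq BR_mult_def by simp
    qed
    then have "P = one_part n"
      using central_perm_part_eq_one_part[OF n P] by blast
    with J show "x \<in> {(one_part n, J) | J. boxed n J}"
      unfolding x_eq by blast
  qed
next
  show "{(one_part n, J) | J. boxed n J} \<subseteq> BR_center n"
  proof
    fix x
    assume "x \<in> {(one_part n, J) | J. boxed n J}"
    then obtain J where x_eq: "x = (one_part n, J)" and J: "boxed n J"
      by blast
    have "BR_mult n x y = BR_mult n y x" if "y \<in> BR n" for y
    proof -
      obtain Q K where y: "y = (Q, K)" "perm_part n Q" "boxed n K"
        using \<open>y \<in> BR n\<close> unfolding BR_def by auto
      have "concat_part n J K = concat_part n K J"
        using concat_boxed[OF J y(3)] concat_boxed[OF y(3) J] by (simp add: Int_commute)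
      then show ?thesis
        unfolding BR_mult_def x_eq y(1)
        using concat_one_part_left[OF y(2)] concat_one_part_right[OF y(2)] by simp
    qed
    with J show "x \<in> BR_center n"
      unfolding BR_center_def x_eq using one_part_boxed_in_BR by blast
  qed
qed

lemma box_part_diff_in_gen_submonoid:
  assumes "finite A" "A \<subseteq> {1..<n}"
  shows "(one_part n, box_part n ({1..n} - A)) \<in> gen_submonoid n"
  using assms
proof (induction A rule: finite_induct)
  case empty
  then show ?case
    using gen_one[of n] unfolding one_part_eq_box_part by simp
next
  case (insert a A)
  have a: "1 \<le> a" "a < n"
    using insert.prems by auto
  have "BR_mult n (one_part n, box_part n ({1..n} - A)) (e_gen n a) =
      (one_part n, box_part n (({1..n} - A) \<inter> ({1..n} - {a})))"
    unfolding BR_mult_def e_gen_def b_part_eq_box_part[OF a]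
    by (simp add: concat_one_part_left perm_part_one_part box_part_concat)
  also have "({1..n} - A) \<inter> ({1..n} - {a}) = {1..n} - insert a A"
    by blast
  finally have "BR_mult n (one_part n, box_part n ({1..n} - A)) (e_gen n a) =
      (one_part n, box_part n ({1..n} - insert a A))" .
  moreover have "(one_part n, box_part n ({1..n} - A)) \<in> gen_submonoid n"
    using insert.IH insert.prems by simp
  moreover have "e_gen n a \<in> gen_submonoid n"
    using a by (intro gen_e) auto
  ultimately show ?case
    by (metis gen_mult)
qed

lemma boxed_eq_gen_submonoid: "{(one_part n, J) | J. boxed n J} = gen_submonoid n"
proof
  show "{(one_part n, J) | J. boxed n J} \<subseteq> gen_submonoid n"
  proof
    fix x
    assume "x \<in> {(one_part n, J) | J. boxed n J}"
    then obtain J where x: "x = (one_part n, J)" and J: "boxed n J"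
      by blast
    have "J = box_part n (cut_points n J)"
      using box_part_cut_points[OF J] by simp
    also have "\<dots> = box_part n ({1..n} - ({1..<n} - cut_points n J))"
      by (rule box_part_cong) auto
    finally show "x \<in> gen_submonoid n"
      using box_part_diff_in_gen_submonoid[of "{1..<n} - cut_points n J" n] x by simp
  qed
next
  show "gen_submonoid n \<subseteq> {(one_part n, J) | J. boxed n J}"
  proof
    fix x
    assume "x \<in> gen_submonoid n"
    then show "x \<in> {(one_part n, J) | J. boxed n J}"
    proof (induction rule: gen_submonoid.induct)
      case gen_one
      then show ?case
        using boxed_box_part[of n "{1..n}"] by (simp add: one_part_eq_box_part)
    next
      case (gen_e i)
      then show ?case
        unfolding e_gen_def using b_part_eq_box_part[of i n] boxed_box_part by auto
    next
      case (gen_mult x y)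
      then show ?case
        unfolding BR_mult_def
        using concat_one_part_left[OF perm_part_one_part] concat_boxed_boxed by auto
    qed
  qed
qed

lemma boxed_submonoid_iso_comp_monoid:
  assumes n: "0 < n"
  shows "(BR_monoid n)\<lparr>carrier := {(one_part n, J) | J. boxed n J}\<rparr> \<cong> comp_monoid n"
proof -
  let ?X = "{(one_part n, J) | J. boxed n J}"
  define h :: "nat set set \<times> nat set set \<Rightarrow> nat list"
    where "h = composition_of \<circ> cut_points n \<circ> snd"
  have "bij_betw snd ?X {J. boxed n J}"
    by (rule bij_betw_byWitness[where f' = "\<lambda>J. (one_part n, J)"]) auto
  then have bij: "bij_betw h ?X (compositions n)"
    unfolding h_def using bij_betw_cut_points[OF n] bij_betw_composition_of[OF n]
    by (auto intro: bij_betw_trans)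
  have h_mult: "h (BR_mult n x y) = comp_join (h x) (h y)" if xy: "x \<in> ?X" "y \<in> ?X" for x y
  proof -
    obtain J K where x: "x = (one_part n, J)" "boxed n J" and y: "y = (one_part n, K)" "boxed n K"
      using xy by blast
    have "h (BR_mult n x y) = composition_of (cut_points n J \<inter> cut_points n K)"
      unfolding h_def BR_mult_def x(1) y(1) using cut_points_concat_boxed[OF n x(2) y(2)] by simp
    also have "\<dots> = comp_join (h x) (h y)"
      unfolding h_def x(1) y(1) using cut_points_boxed[OF n x(2)] cut_points_boxed[OF n y(2)]
      by (simp add: composition_of_Int)
    finally show ?thesis .
  qed
  have h_in: "h x \<in> compositions n" if "x \<in> ?X" for x
    using bij_betwE[OF bij] that by blast
  have "h \<in> hom ((BR_monoid n)\<lparr>carrier := ?X\<rparr>) (comp_monoid n)"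
    by (rule homI) (simp_all add: BR_monoid_def comp_monoid_def h_in h_mult)
  moreover have "bij_betw h (carrier ((BR_monoid n)\<lparr>carrier := ?X\<rparr>)) (carrier (comp_monoid n))"
    using bij by (simp add: comp_monoid_def)
  ultimately show ?thesis
    by (blast intro: is_isoI isoI)
qed

theorem proposition5p16:
  fixes n :: nat
  assumes "n \<ge> 3"
  shows "BR_center n = {(one_part n, J) | J. boxed n J}
     \<and> {(one_part n, J) | J. boxed n J} = gen_submonoid n
     \<and> (BR_monoid n)\<lparr>carrier := {(one_part n, J) | J. boxed n J}\<rparr> \<cong> comp_monoid n"
  using BR_center_eq[OF assms] boxed_eq_gen_submonoid boxed_submonoid_iso_comp_monoid assms
  by simp

end
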